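(* Let $M=(V,\delta)$ be an $n$-point metric and let $r':V\to\mathbb{R}^+$ be a bounding function such that $SDG(M,r')$ is connected. Then $OPT(M)\le OPT(M,r') = O(\log n)\cdot OPT(M)$. More precisely, letting $T$ be the minimum spanning tree of $SDG(M,r')$ and defining $r(v)$ as the weight of the heaviest edge of $T$ incident to $v$, the assignment $r$ is feasible for the bounded problem and $COST(r)\le 2w(T) = O(\log n)\cdot w(MST(M)) = O(\log n)\cdot OPT(M)$.
   Context: For a metric $M=(V,\delta)$ and $r:V\to\mathbb{R}^+$, $SDG(M,r)$ is the graph on $V$ containing edge $(u,v)$ of weight $\delta(u,v)$ iff $r(u)\ge\delta(u,v)$ and $r(v)\ge\delta(u,v)$. The cost of a range assignment $r$ is $COST(r)=\sum_{v\in V} r(v)$. Given a bounding function $r'$, the bounded range assignment problem asks for $r$ with $r(v)\le r'(v)$ for all $v$, $SDG(M,r)$ connected, and minimum $COST(r)$; its optimal cost is $OPT(M,r')$. The unbounded problem is the case $r'(v)=diam(M)$ (the largest pairwise distance) for all $v$; its optimal cost is $OPT(M)$. $MST(M)$ is the minimum spanning tree of the complete weighted graph on $V$ with weights $\delta$. *)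

theory Defs
  imports Complex_Main
begin

definition metric_on :: "'a set \<Rightarrow> ('a \<Rightarrow> 'a \<Rightarrow> real) \<Rightarrow> bool" where
  "metric_on V \<delta> \<longleftrightarrow> finite V \<and>
     (\<forall>u\<in>V. \<forall>v\<in>V. \<delta> u v = 0 \<longleftrightarrow> u = v) \<and>
     (\<forall>u\<in>V. \<forall>v\<in>V. 0 \<le> \<delta> u v) \<and>
     (\<forall>u\<in>V. \<forall>v\<in>V. \<delta> u v = \<delta> v u) \<and>
     (\<forall>u\<in>V. \<forall>v\<in>V. \<forall>w\<in>V. \<delta> u w \<le> \<delta> u v + \<delta> v w)"

definition diam :: "'a set \<Rightarrow> ('a \<Rightarrow> 'a \<Rightarrow> real) \<Rightarrow> real" where
  "diam V \<delta> = Max {\<delta> u v | u v. u \<in> V \<and> v \<in> V}"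

text \<open>Undirected edges are 2-element sets; the weight of edge {u,v} is delta u v.\<close>
definition edge_weight :: "('a \<Rightarrow> 'a \<Rightarrow> real) \<Rightarrow> 'a set \<Rightarrow> real" where
  "edge_weight \<delta> e = (SOME d. \<exists>u v. e = {u, v} \<and> d = \<delta> u v)"

definition weight :: "('a \<Rightarrow> 'a \<Rightarrow> real) \<Rightarrow> 'a set set \<Rightarrow> real" where
  "weight \<delta> F = (\<Sum>e\<in>F. edge_weight \<delta> e)"

definition sdg_edges :: "'a set \<Rightarrow> ('a \<Rightarrow> 'a \<Rightarrow> real) \<Rightarrow> ('a \<Rightarrow> real) \<Rightarrow> 'a set set" where
  "sdg_edges V \<delta> r = {{u, v} | u v. u \<in> V \<and> v \<in> V \<and> u \<noteq> v \<and> r u \<ge> \<delta> u v \<and> r v \<ge> \<delta> u v}"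

definition complete_edges :: "'a set \<Rightarrow> 'a set set" where
  "complete_edges V = {{u, v} | u v. u \<in> V \<and> v \<in> V \<and> u \<noteq> v}"

definition graph_connected :: "'a set \<Rightarrow> 'a set set \<Rightarrow> bool" where
  "graph_connected V E \<longleftrightarrow>
     (\<forall>u\<in>V. \<forall>v\<in>V. (u, v) \<in> ({(x, y). {x, y} \<in> E \<and> x \<noteq> y})\<^sup>*)"

definition spanning_tree :: "'a set \<Rightarrow> 'a set set \<Rightarrow> 'a set set \<Rightarrow> bool" where
  "spanning_tree V E T \<longleftrightarrow> T \<subseteq> E \<and> graph_connected V T \<and> card T = card V - 1"

definition is_mst :: "'a set \<Rightarrow> ('a \<Rightarrow> 'a \<Rightarrow> real) \<Rightarrow> 'a set set \<Rightarrow> 'a set set \<Rightarrow> bool" where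
  "is_mst V \<delta> E T \<longleftrightarrow> spanning_tree V E T \<and>
     (\<forall>T'. spanning_tree V E T' \<longrightarrow> weight \<delta> T \<le> weight \<delta> T')"

definition COST :: "'a set \<Rightarrow> ('a \<Rightarrow> real) \<Rightarrow> real" where
  "COST V r = (\<Sum>v\<in>V. r v)"

definition feasible :: "'a set \<Rightarrow> ('a \<Rightarrow> 'a \<Rightarrow> real) \<Rightarrow> ('a \<Rightarrow> real) \<Rightarrow> ('a \<Rightarrow> real) \<Rightarrow> bool" where
  "feasible V \<delta> r' r \<longleftrightarrow> (\<forall>v\<in>V. 0 \<le> r v \<and> r v \<le> r' v) \<and> graph_connected V (sdg_edges V \<delta> r)"

definition OPT_bounded :: "'a set \<Rightarrow> ('a \<Rightarrow> 'a \<Rightarrow> real) \<Rightarrow> ('a \<Rightarrow> real) \<Rightarrow> real" where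
  "OPT_bounded V \<delta> r' = Inf {COST V r | r. feasible V \<delta> r' r}"

definition OPT :: "'a set \<Rightarrow> ('a \<Rightarrow> 'a \<Rightarrow> real) \<Rightarrow> real" where
  "OPT V \<delta> = OPT_bounded V \<delta> (\<lambda>_. diam V \<delta>)"

definition tree_range :: "('a \<Rightarrow> 'a \<Rightarrow> real) \<Rightarrow> 'a set set \<Rightarrow> 'a \<Rightarrow> real" where
  "tree_range \<delta> T v = Max {edge_weight \<delta> e | e. e \<in> T \<and> v \<in> e}"

end

theory Submission
  imports Defs "HOL-Library.Transitive_Closure_Table"
begin

(* Let T be a minimum spanning tree of SDG(M,r') and Tm one of the complete graph.
   (1) Giving every vertex the weight of its heaviest incident T-edge is feasible for the bound r'
       (T-edges are SDG(M,r')-edges) and costs at most 2 w(T): each edge is charged by its two ends.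
   (2) Every feasible r admits a spanning tree inside SDG(M,r) of weight at most COST(r) (orient a
       breadth-first tree towards a root and charge each edge to its lower end), so w(Tm) <= OPT(M);
       and the all-diameter assignment shows that the unbounded problem is feasible.
   (3) Root T and let l(v) = delta(v, parent v).  The cut property of the MST T shows that
       min(l x, l y) <= delta(x, y) for distinct non-root x, y, so every set B of non-root vertices
       is (min_B l)-separated.  A packing argument with the truncated distance functions
       min(delta(b, _), m/2) gives |B| * min_B l <= 4 w(Tm).  Summing l in increasing order then
       yields w(T) <= 4 w(Tm) H(n-1) <= 8 ln n * w(Tm). *)

lemma edge_weight_pair:
  assumes "d a b = d b a"
  shows "edge_weight d {a, b} = d a b"
proof -
  let ?P = "\<lambda>x. \<exists>u v. {a, b} = {u, v} \<and> x = d u v"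
  have "?P (SOME x. ?P x)" by (rule someI_ex) blast
  moreover have "d u v = d a b" if "{a, b} = {u, v}" for u v
    using that assms by (metis doubleton_eq_iff)
  ultimately show ?thesis unfolding edge_weight_def by blast
qed

lemma metric_finite: "metric_on V \<delta> \<Longrightarrow> finite V"
  unfolding metric_on_def by blast

lemma metric_zero: "metric_on V \<delta> \<Longrightarrow> v \<in> V \<Longrightarrow> \<delta> v v = 0"
  unfolding metric_on_def by blast

lemma metric_nonneg: "metric_on V \<delta> \<Longrightarrow> u \<in> V \<Longrightarrow> v \<in> V \<Longrightarrow> 0 \<le> \<delta> u v"
  unfolding metric_on_def by blast

lemma metric_sym: "metric_on V \<delta> \<Longrightarrow> u \<in> V \<Longrightarrow> v \<in> V \<Longrightarrow> \<delta> u v = \<delta> v u"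
  unfolding metric_on_def by blast

lemma metric_triangle:
  "metric_on V \<delta> \<Longrightarrow> u \<in> V \<Longrightarrow> v \<in> V \<Longrightarrow> w \<in> V \<Longrightarrow> \<delta> u w \<le> \<delta> u v + \<delta> v w"
  unfolding metric_on_def by blast

lemma metric_lipschitz:
  assumes "metric_on V \<delta>" "i \<in> V" "a \<in> V" "b \<in> V"
  shows "\<bar>\<delta> i a - \<delta> i b\<bar> \<le> \<delta> a b"
  using metric_triangle[OF assms(1,2,3,4)] metric_triangle[OF assms(1,2,4,3)]
    metric_sym[OF assms(1,3,4)] by linarith

lemma metric_edge_weight: "metric_on V \<delta> \<Longrightarrow> a \<in> V \<Longrightarrow> b \<in> V \<Longrightarrow> edge_weight \<delta> {a, b} = \<delta> a b"
  by (rule edge_weight_pair) (rule metric_sym)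

lemma complete_edgeE:
  assumes "e \<in> complete_edges V"
  obtains a b where "e = {a, b}" "a \<in> V" "b \<in> V" "a \<noteq> b"
  using assms unfolding complete_edges_def by blast

lemma complete_edge_iff: "{a, b} \<in> complete_edges V \<longleftrightarrow> a \<in> V \<and> b \<in> V \<and> a \<noteq> b"
proof
  assume "{a, b} \<in> complete_edges V"
  then obtain u v where uv: "{a, b} = {u, v}" "u \<in> V" "v \<in> V" "u \<noteq> v"
    by (rule complete_edgeE)
  then have "a = u \<and> b = v \<or> a = v \<and> b = u" by (simp add: doubleton_eq_iff)
  then show "a \<in> V \<and> b \<in> V \<and> a \<noteq> b" using uv(2-4) by blast
next
  assume "a \<in> V \<and> b \<in> V \<and> a \<noteq> b"
  then show "{a, b} \<in> complete_edges V" unfolding complete_edges_def by blast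
qed

lemma finite_complete_edges: "finite V \<Longrightarrow> finite (complete_edges V)"
  by (rule finite_subset[of _ "Pow V"]) (auto simp: complete_edges_def)

lemma finite_edges: "metric_on V \<delta> \<Longrightarrow> E \<subseteq> complete_edges V \<Longrightarrow> finite E"
  using finite_complete_edges[OF metric_finite] finite_subset by blast

lemma complete_edges_pairs: "E \<subseteq> complete_edges V \<Longrightarrow> \<forall>e\<in>E. \<exists>a b. e = {a, b}"
  by (blast elim: complete_edgeE)

lemma edge_weight_nonneg: "metric_on V \<delta> \<Longrightarrow> e \<in> complete_edges V \<Longrightarrow> 0 \<le> edge_weight \<delta> e"
  by (auto elim!: complete_edgeE simp: metric_edge_weight metric_nonneg)

lemma weight_nonneg: "metric_on V \<delta> \<Longrightarrow> E \<subseteq> complete_edges V \<Longrightarrow> 0 \<le> weight \<delta> E"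
  unfolding weight_def by (intro sum_nonneg) (auto intro: edge_weight_nonneg)

lemma sdg_edges_subset: "sdg_edges V \<delta> r \<subseteq> complete_edges V"
  unfolding sdg_edges_def complete_edges_def by blast

lemma sdg_edge_iff:
  assumes "metric_on V \<delta>"
  shows "{a, b} \<in> sdg_edges V \<delta> r \<longleftrightarrow> a \<in> V \<and> b \<in> V \<and> a \<noteq> b \<and> \<delta> a b \<le> r a \<and> \<delta> a b \<le> r b"
proof
  assume "{a, b} \<in> sdg_edges V \<delta> r"
  then obtain u v where uv: "{a, b} = {u, v}" "u \<in> V" "v \<in> V" "u \<noteq> v" "\<delta> u v \<le> r u" "\<delta> u v \<le> r v"
    unfolding sdg_edges_def by blast
  then have "u = a \<and> v = b \<or> u = b \<and> v = a" by (metis doubleton_eq_iff)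
  then show "a \<in> V \<and> b \<in> V \<and> a \<noteq> b \<and> \<delta> a b \<le> r a \<and> \<delta> a b \<le> r b"
    using uv metric_sym[OF assms] by auto
qed (auto simp: sdg_edges_def)

definition adj :: "'a set set \<Rightarrow> ('a \<times> 'a) set" where
  "adj E = {(x, y). {x, y} \<in> E \<and> x \<noteq> y}"

lemma graph_connected_adj: "graph_connected V E \<longleftrightarrow> (\<forall>u\<in>V. \<forall>v\<in>V. (u, v) \<in> (adj E)\<^sup>*)"
  unfolding graph_connected_def adj_def by simp

lemma reachable_sym: "(x, y) \<in> (adj E)\<^sup>* \<Longrightarrow> (y, x) \<in> (adj E)\<^sup>*"
proof -
  have "sym (adj E)" unfolding adj_def sym_def by (auto simp: insert_commute)
  then show "(x, y) \<in> (adj E)\<^sup>* \<Longrightarrow> (y, x) \<in> (adj E)\<^sup>*" by (metis sym_rtrancl symD)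
qed

lemma reachable_mono: "E \<subseteq> F \<Longrightarrow> (x, y) \<in> (adj E)\<^sup>* \<Longrightarrow> (x, y) \<in> (adj F)\<^sup>*"
proof -
  assume "E \<subseteq> F"
  then have "adj E \<subseteq> adj F" unfolding adj_def by auto
  then show "(x, y) \<in> (adj E)\<^sup>* \<Longrightarrow> (x, y) \<in> (adj F)\<^sup>*" using rtrancl_mono by blast
qed

lemma graph_connected_mono: "graph_connected V E \<Longrightarrow> E \<subseteq> F \<Longrightarrow> graph_connected V F"
  unfolding graph_connected_adj by (metis reachable_mono)

lemma graph_connected_via: "(\<And>u. u \<in> V \<Longrightarrow> (u, \<rho>) \<in> (adj E)\<^sup>*) \<Longrightarrow> graph_connected V E"
  unfolding graph_connected_adj by (metis reachable_sym rtrancl_trans)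

lemma connected_incident_edge:
  assumes "graph_connected V E" "u \<in> V" "v \<in> V" "u \<noteq> v"
  obtains z where "{v, z} \<in> E"
proof -
  have "(v, u) \<in> (adj E)\<^sup>*" using assms(1-3) unfolding graph_connected_adj by blast
  then obtain z where "(v, z) \<in> adj E" using assms(4) by (cases rule: converse_rtranclE) auto
  then show ?thesis using that unfolding adj_def by blast
qed

definition variation :: "('a \<Rightarrow> real) \<Rightarrow> 'a set \<Rightarrow> real" where
  "variation f e = edge_weight (\<lambda>a b. \<bar>f a - f b\<bar>) e"

lemma variation_pair [simp]: "variation f {a, b} = \<bar>f a - f b\<bar>"
  unfolding variation_def by (rule edge_weight_pair) simp

fun walk_edges :: "'a \<Rightarrow> 'a list \<Rightarrow> 'a set set" where
  "walk_edges x [] = {}"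
| "walk_edges x (z # zs) = insert {x, z} (walk_edges z zs)"

lemma walk_edges_subset: "e \<in> walk_edges x xs \<Longrightarrow> e \<subseteq> set (x # xs)"
  by (induction x xs rule: walk_edges.induct) auto

lemma finite_walk_edges [simp]: "finite (walk_edges x xs)"
  by (induction x xs rule: walk_edges.induct) auto

lemma variation_along_simple_path:
  assumes "rtrancl_path (\<lambda>a b. (a, b) \<in> adj E) x xs y" "distinct (x # xs)"
  shows "\<bar>f x - f y\<bar> \<le> (\<Sum>e\<in>walk_edges x xs. variation f e) \<and> walk_edges x xs \<subseteq> E"
  using assms
proof (induction rule: rtrancl_path.induct)
  case (step x z zs y)
  have fresh: "{x, z} \<notin> walk_edges z zs"
    using step.prems walk_edges_subset[of "{x, z}" z zs] by auto
  have "\<bar>f x - f y\<bar> \<le> \<bar>f x - f z\<bar> + \<bar>f z - f y\<bar>" by linarith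
  also have "\<dots> \<le> variation f {x, z} + (\<Sum>e\<in>walk_edges z zs. variation f e)"
    using step by simp
  also have "\<dots> = (\<Sum>e\<in>walk_edges x (z # zs). variation f e)"
    using fresh by simp
  finally show ?case using step unfolding adj_def by auto
qed simp

lemma variation_along_reachable:
  assumes "finite E" "\<forall>e\<in>E. \<exists>a b. e = {a, b}" "(x, y) \<in> (adj E)\<^sup>*"
  shows "\<bar>f x - f y\<bar> \<le> (\<Sum>e\<in>E. variation f e)"
proof -
  have "(\<lambda>a b. (a, b) \<in> adj E)\<^sup>*\<^sup>* x y" using assms(3) by (simp add: rtranclp_rtrancl_eq)
  then obtain xs where "rtrancl_path (\<lambda>a b. (a, b) \<in> adj E) x xs y"
    unfolding rtranclp_eq_rtrancl_path by blast
  then obtain xs' where "rtrancl_path (\<lambda>a b. (a, b) \<in> adj E) x xs' y" "distinct (x # xs')"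
    by (rule rtrancl_path_distinct)
  note path = variation_along_simple_path[OF this, of f]
  have "0 \<le> variation f e" if "e \<in> E" for e
  proof -
    obtain a b where "e = {a, b}" using assms(2) \<open>e \<in> E\<close> by blast
    then show ?thesis by simp
  qed
  then have "(\<Sum>e\<in>walk_edges x xs'. variation f e) \<le> (\<Sum>e\<in>E. variation f e)"
    using path assms(1) by (intro sum_mono2) auto
  with path show ?thesis by linarith
qed

lemma variation_le_weight:
  assumes met: "metric_on V \<delta>" and EV: "E \<subseteq> complete_edges V"
    and lip: "\<And>a b. a \<in> V \<Longrightarrow> b \<in> V \<Longrightarrow> \<bar>f a - f b\<bar> \<le> \<delta> a b"
  shows "(\<Sum>e\<in>E. variation f e) \<le> weight \<delta> E"
  unfolding weight_def
proof (rule sum_mono)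
  fix e assume "e \<in> E"
  then obtain a b where "e = {a, b}" "a \<in> V" "b \<in> V" using EV by (blast elim: complete_edgeE)
  then show "variation f e \<le> edge_weight \<delta> e" using lip met by (simp add: metric_edge_weight)
qed

lemma dist_le_connected_weight:
  assumes met: "metric_on V \<delta>" and conn: "graph_connected V E" and EV: "E \<subseteq> complete_edges V"
    and "x \<in> V" "y \<in> V"
  shows "\<delta> x y \<le> weight \<delta> E"
proof -
  have "(x, y) \<in> (adj E)\<^sup>*" using conn assms(4,5) unfolding graph_connected_adj by blast
  then have "\<bar>\<delta> x x - \<delta> x y\<bar> \<le> (\<Sum>e\<in>E. variation (\<delta> x) e)"
    by (rule variation_along_reachable[OF finite_edges[OF met EV] complete_edges_pairs[OF EV]])
  also have "\<dots> \<le> weight \<delta> E"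
    by (rule variation_le_weight[OF met EV]) (rule metric_lipschitz[OF met assms(4)])
  finally show ?thesis using metric_zero[OF met assms(4)] metric_nonneg[OF met assms(4,5)] by simp
qed

section \<open>Rooted parent trees\<close>

text \<open>A parent map p on V towards the root \<rho>, made well-founded by a depth function that strictly
  decreases from a vertex to its parent.\<close>
definition parent_structure :: "'a set \<Rightarrow> 'a \<Rightarrow> ('a \<Rightarrow> 'a) \<Rightarrow> ('a \<Rightarrow> nat) \<Rightarrow> bool" where
  "parent_structure V \<rho> p dep \<longleftrightarrow> \<rho> \<in> V \<and> (\<forall>v\<in>V - {\<rho>}. p v \<in> V \<and> p v \<noteq> v \<and> dep (p v) < dep v)"

definition parent_tree :: "'a set \<Rightarrow> 'a \<Rightarrow> ('a \<Rightarrow> 'a) \<Rightarrow> 'a set set" where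
  "parent_tree V \<rho> p = (\<lambda>v. {v, p v}) ` (V - {\<rho>})"

definition parent_step :: "'a set \<Rightarrow> 'a \<Rightarrow> ('a \<Rightarrow> 'a) \<Rightarrow> ('a \<times> 'a) set" where
  "parent_step V \<rho> p = {(u, p u) | u. u \<in> V - {\<rho>}}"

definition subtree :: "'a set \<Rightarrow> 'a \<Rightarrow> ('a \<Rightarrow> 'a) \<Rightarrow> 'a \<Rightarrow> 'a set" where
  "subtree V \<rho> p v = {u \<in> V. (u, v) \<in> (parent_step V \<rho> p)\<^sup>*}"

context
  fixes V :: "'a set" and \<rho> :: 'a and p :: "'a \<Rightarrow> 'a" and dep :: "'a \<Rightarrow> nat"
  assumes ps: "parent_structure V \<rho> p dep"
begin

lemma root_in: "\<rho> \<in> V"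
  using ps unfolding parent_structure_def by blast

lemma parent_props: "v \<in> V - {\<rho>} \<Longrightarrow> p v \<in> V \<and> p v \<noteq> v \<and> dep (p v) < dep v"
  using ps unfolding parent_structure_def by blast

lemma parent_tree_inj: "inj_on (\<lambda>v. {v, p v}) (V - {\<rho>})"
proof
  fix u v assume u: "u \<in> V - {\<rho>}" and v: "v \<in> V - {\<rho>}" and eq: "{u, p u} = {v, p v}"
  show "u = v"
  proof (rule ccontr)
    assume "u \<noteq> v"
    then have "u = p v" "v = p u" using eq by (metis doubleton_eq_iff)+
    then show False using parent_props[OF u] parent_props[OF v] by simp
  qed
qed

lemma card_parent_tree: "finite V \<Longrightarrow> card (parent_tree V \<rho> p) = card V - 1"
  unfolding parent_tree_def using card_image[OF parent_tree_inj] root_in by simp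

lemma weight_parent_tree:
  assumes "metric_on V \<delta>"
  shows "weight \<delta> (parent_tree V \<rho> p) = (\<Sum>v\<in>V - {\<rho>}. \<delta> v (p v))"
proof -
  have "weight \<delta> (parent_tree V \<rho> p) = (\<Sum>v\<in>V - {\<rho>}. edge_weight \<delta> {v, p v})"
    unfolding weight_def parent_tree_def by (simp add: sum.reindex[OF parent_tree_inj])
  also have "\<dots> = (\<Sum>v\<in>V - {\<rho>}. \<delta> v (p v))"
    using parent_props assms by (intro sum.cong) (auto simp: metric_edge_weight)
  finally show ?thesis .
qed

lemma parent_step_dep: "(u, v) \<in> (parent_step V \<rho> p)\<^sup>+ \<Longrightarrow> dep v < dep u"
proof (induction rule: trancl_induct)
  case (base y) then show ?case using parent_props unfolding parent_step_def by auto
next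
  case (step y z)
  then have "dep z < dep y" using parent_props unfolding parent_step_def by auto
  with step.IH show ?case by linarith
qed

lemma subtree_antisym:
  assumes "u \<in> subtree V \<rho> p v" "v \<in> subtree V \<rho> p u"
  shows "u = v"
proof (rule ccontr)
  assume "u \<noteq> v"
  then have "(u, v) \<in> (parent_step V \<rho> p)\<^sup>+" "(v, u) \<in> (parent_step V \<rho> p)\<^sup>+"
    using assms unfolding subtree_def by (auto simp: rtrancl_eq_or_trancl)
  then show False using parent_step_dep[of u v] parent_step_dep[of v u] by linarith
qed

lemma reaches_root: "u \<in> V \<Longrightarrow> (u, \<rho>) \<in> (parent_step V \<rho> p)\<^sup>*"
proof (induction "dep u" arbitrary: u rule: less_induct)
  case less
  show ?case
  proof (cases "u = \<rho>")
    case False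
    then have u: "u \<in> V - {\<rho>}" using less.prems by blast
    then have "(u, p u) \<in> parent_step V \<rho> p" unfolding parent_step_def by blast
    moreover have "(p u, \<rho>) \<in> (parent_step V \<rho> p)\<^sup>*"
      using parent_props[OF u] by (intro less.hyps) auto
    ultimately show ?thesis by (rule converse_rtrancl_into_rtrancl)
  qed simp
qed

lemma parent_step_adj: "parent_step V \<rho> p \<subseteq> adj (parent_tree V \<rho> p)"
proof
  fix x assume "x \<in> parent_step V \<rho> p"
  then obtain u where u: "x = (u, p u)" "u \<in> V - {\<rho>}" unfolding parent_step_def by blast
  then show "x \<in> adj (parent_tree V \<rho> p)"
    unfolding adj_def parent_tree_def using parent_props[OF u(2)] by auto
qed

lemma parent_tree_connected: "graph_connected V (parent_tree V \<rho> p)"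
proof (rule graph_connected_via)
  fix u assume "u \<in> V"
  then have "(u, \<rho>) \<in> (parent_step V \<rho> p)\<^sup>*" by (rule reaches_root)
  then show "(u, \<rho>) \<in> (adj (parent_tree V \<rho> p))\<^sup>*" using rtrancl_mono[OF parent_step_adj] by blast
qed

lemma parent_tree_spanning:
  "finite V \<Longrightarrow> parent_tree V \<rho> p \<subseteq> E \<Longrightarrow> spanning_tree V E (parent_tree V \<rho> p)"
  unfolding spanning_tree_def using parent_tree_connected card_parent_tree by blast

lemma parent_edge_subtree_side:
  assumes u: "u \<in> V - {\<rho>}" and "u \<noteq> v"
  shows "u \<in> subtree V \<rho> p v \<longleftrightarrow> p u \<in> subtree V \<rho> p v"
proof
  assume "u \<in> subtree V \<rho> p v"
  then have "(u, v) \<in> (parent_step V \<rho> p)\<^sup>*" unfolding subtree_def by blast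
  then obtain z where "(u, z) \<in> parent_step V \<rho> p" "(z, v) \<in> (parent_step V \<rho> p)\<^sup>*"
    using \<open>u \<noteq> v\<close> by (cases rule: converse_rtranclE) auto
  then show "p u \<in> subtree V \<rho> p v"
    unfolding subtree_def parent_step_def using parent_props[OF u] by auto
next
  assume "p u \<in> subtree V \<rho> p v"
  moreover have "(u, p u) \<in> parent_step V \<rho> p" unfolding parent_step_def using u by blast
  ultimately have "(u, v) \<in> (parent_step V \<rho> p)\<^sup>*"
    unfolding subtree_def by (simp add: converse_rtrancl_into_rtrancl)
  then show "u \<in> subtree V \<rho> p v" unfolding subtree_def using u by blast
qed

lemma reach_without_parent_edge:
  assumes v: "v \<in> V - {\<rho>}" and "u \<in> V"
  shows "(u, if u \<in> subtree V \<rho> p v then v else \<rho>) \<in> (adj (parent_tree V \<rho> p - {{v, p v}}))\<^sup>*"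
  using assms(2)
proof (induction "dep u" arbitrary: u rule: less_induct)
  case less
  let ?t = "\<lambda>u. if u \<in> subtree V \<rho> p v then v else \<rho>"
  let ?F = "parent_tree V \<rho> p - {{v, p v}}"
  show ?case
  proof (cases "u = ?t u")
    case True then show ?thesis by simp
  next
    case False
    have "u \<noteq> \<rho>"
    proof
      assume "u = \<rho>"
      then have "(\<rho>, v) \<in> (parent_step V \<rho> p)\<^sup>*" "\<rho> \<noteq> v"
        using False v unfolding subtree_def by (auto split: if_splits)
      then obtain z where "(\<rho>, z) \<in> parent_step V \<rho> p" by (cases rule: converse_rtranclE) auto
      then show False unfolding parent_step_def by auto
    qed
    then have u: "u \<in> V - {\<rho>}" using less.prems by blast
    have "v \<in> subtree V \<rho> p v" using v unfolding subtree_def by simp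
    then have "u \<noteq> v" using False by auto
    then have side: "?t (p u) = ?t u" using parent_edge_subtree_side[OF u] by simp
    have "{u, p u} \<noteq> {v, p v}"
    proof
      assume "{u, p u} = {v, p v}"
      then have "u = v" using inj_onD[OF parent_tree_inj _ u v] by simp
      then show False using \<open>u \<noteq> v\<close> by contradiction
    qed
    moreover have "{u, p u} \<in> parent_tree V \<rho> p" unfolding parent_tree_def using u by (rule imageI)
    ultimately have "(u, p u) \<in> adj ?F" unfolding adj_def using parent_props[OF u] by auto
    moreover have "(p u, ?t (p u)) \<in> (adj ?F)\<^sup>*"
      using parent_props[OF u] by (intro less.hyps) auto
    ultimately have "(u, ?t (p u)) \<in> (adj ?F)\<^sup>*" by (rule converse_rtrancl_into_rtrancl)
    then show ?thesis unfolding side .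
  qed
qed

end

text \<open>Breadth-first search: every connected graph on V contains a parent tree towards any root.\<close>
lemma parent_structure_exists:
  assumes conn: "graph_connected V E" and root: "\<rho> \<in> V" and EV: "E \<subseteq> complete_edges V"
  shows "\<exists>p (dep :: 'a \<Rightarrow> nat). parent_structure V \<rho> p dep \<and> parent_tree V \<rho> p \<subseteq> E"
proof -
  define dep where "dep v = (LEAST k. (\<rho>, v) \<in> adj E ^^ k)" for v
  have closer: "\<exists>w. {v, w} \<in> E \<and> w \<noteq> v \<and> dep w < dep v" if v: "v \<in> V - {\<rho>}" for v
  proof -
    have "(\<rho>, v) \<in> (adj E)\<^sup>*" using conn root v unfolding graph_connected_adj by blast
    then obtain k where "(\<rho>, v) \<in> adj E ^^ k" using rtrancl_power by blast
    then have dv: "(\<rho>, v) \<in> adj E ^^ dep v" unfolding dep_def by (rule LeastI)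
    have "dep v \<noteq> 0" using dv v by (intro notI) simp
    then obtain j where j: "dep v = Suc j" using not0_implies_Suc by blast
    then have "(\<rho>, v) \<in> adj E ^^ j O adj E" using dv by simp
    then obtain w where w: "(\<rho>, w) \<in> adj E ^^ j" "(w, v) \<in> adj E" by blast
    have "dep w \<le> j" unfolding dep_def using w(1) by (rule Least_le)
    moreover have "{v, w} \<in> E" "w \<noteq> v" using w(2) unfolding adj_def by (simp_all add: insert_commute)
    ultimately show ?thesis using j by (intro exI[of _ w]) simp
  qed
  define p where "p v = (SOME w. {v, w} \<in> E \<and> w \<noteq> v \<and> dep w < dep v)" for v
  have p: "{v, p v} \<in> E \<and> p v \<noteq> v \<and> dep (p v) < dep v" if "v \<in> V - {\<rho>}" for v
    unfolding p_def using closer[OF that] by (rule someI_ex)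
  have "p v \<in> V" if "v \<in> V - {\<rho>}" for v
  proof -
    have "{v, p v} \<in> complete_edges V" using p[OF that] EV by blast
    then show ?thesis unfolding complete_edge_iff by blast
  qed
  then have "parent_structure V \<rho> p dep" unfolding parent_structure_def using p root by blast
  moreover have "parent_tree V \<rho> p \<subseteq> E" unfolding parent_tree_def using p by blast
  ultimately show ?thesis by blast
qed

lemma spanning_tree_is_parent_tree:
  assumes st: "spanning_tree V E T" and EV: "E \<subseteq> complete_edges V" and fin: "finite V"
    and root: "\<rho> \<in> V"
  obtains p dep where "parent_structure V \<rho> p dep" "T = parent_tree V \<rho> p"
proof -
  have TE: "T \<subseteq> E" and conn: "graph_connected V T" and cardT: "card T = card V - 1"
    using st unfolding spanning_tree_def by auto
  have TV: "T \<subseteq> complete_edges V" using TE EV by (rule order_trans)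
  obtain p and dep :: "'a \<Rightarrow> nat" where ps: "parent_structure V \<rho> p dep"
    and sub: "parent_tree V \<rho> p \<subseteq> T"
    using parent_structure_exists[OF conn root TV] by blast
  have "finite T" using TV finite_complete_edges[OF fin] by (rule finite_subset)
  moreover have "card (parent_tree V \<rho> p) = card T" using card_parent_tree[OF ps fin] cardT by simp
  ultimately have "parent_tree V \<rho> p = T" using sub by (simp add: card_subset_eq)
  with ps show ?thesis by (rule that[OF _ sym])
qed

text \<open>A connected graph has a minimum spanning tree (there are finitely many spanning trees).\<close>
lemma mst_exists:
  assumes fin: "finite V" and "V \<noteq> {}" and conn: "graph_connected V E" and EV: "E \<subseteq> complete_edges V"
  obtains T where "is_mst V \<delta> E T"
proof -
  obtain \<rho> where root: "\<rho> \<in> V" using assms(2) by blast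
  define S where "S = {T. spanning_tree V E T}"
  have "finite E" using EV finite_complete_edges[OF fin] by (rule finite_subset)
  moreover have "S \<subseteq> Pow E" unfolding S_def spanning_tree_def by blast
  ultimately have Sfin: "finite S" by (meson finite_Pow_iff finite_subset)
  obtain p and dep :: "'a \<Rightarrow> nat" where "parent_structure V \<rho> p dep" "parent_tree V \<rho> p \<subseteq> E"
    using parent_structure_exists[OF conn root EV] by blast
  then have "parent_tree V \<rho> p \<in> S" unfolding S_def by (simp add: parent_tree_spanning fin)
  then have "Min (weight \<delta> ` S) \<in> weight \<delta> ` S" using Sfin by (intro Min_in) auto
  then obtain T where T: "T \<in> S" "weight \<delta> T = Min (weight \<delta> ` S)" by (metis imageE)
  have "weight \<delta> T \<le> weight \<delta> T'" if "spanning_tree V E T'" for T'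
    unfolding T(2) using Sfin that by (simp add: S_def)
  then have "is_mst V \<delta> E T" using T(1) unfolding is_mst_def S_def by blast
  then show ?thesis by (rule that)
qed

section \<open>The cut property of minimum spanning trees\<close>

lemma mst_exchange:
  assumes mst: "is_mst V \<delta> G T" and fin: "finite T" and e: "e \<in> T" and f: "f \<in> G" "f \<notin> T"
    and conn: "graph_connected V (insert f (T - {e}))"
  shows "edge_weight \<delta> e \<le> edge_weight \<delta> f"
proof -
  let ?T' = "insert f (T - {e})"
  have "card T > 0" using fin e by (auto simp: card_gt_0_iff)
  then have "card ?T' = card T" using fin e f(2) by (simp add: card_Diff_singleton)
  then have "spanning_tree V G ?T'" using mst conn f(1) unfolding is_mst_def spanning_tree_def by auto
  then have "weight \<delta> T \<le> weight \<delta> ?T'" using mst unfolding is_mst_def by blast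
  moreover have "weight \<delta> T = edge_weight \<delta> e + weight \<delta> (T - {e})"
    unfolding weight_def using fin e by (rule sum.remove)
  moreover have "weight \<delta> ?T' = edge_weight \<delta> f + weight \<delta> (T - {e})"
    unfolding weight_def using fin f(2) by simp
  ultimately show ?thesis by linarith
qed

lemma mst_cut_property:
  assumes met: "metric_on V \<delta>" and ps: "parent_structure V \<rho> p dep"
    and T: "T = parent_tree V \<rho> p" and mst: "is_mst V \<delta> G T"
    and v: "v \<in> V - {\<rho>}" and x: "x \<in> subtree V \<rho> p v" and y: "y \<in> V" "y \<notin> subtree V \<rho> p v"
    and xy: "{x, y} \<in> G"
  shows "\<delta> v (p v) \<le> \<delta> x y"
proof (rule ccontr)
  assume less: "\<not> \<delta> v (p v) \<le> \<delta> x y"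
  let ?S = "subtree V \<rho> p v"
  let ?T' = "insert {x, y} (T - {{v, p v}})"
  have xV: "x \<in> V" using x unfolding subtree_def by blast
  have vV: "v \<in> V" "p v \<in> V" using v parent_props[OF ps v] by auto
  have fin: "finite T" unfolding T parent_tree_def using metric_finite[OF met] by simp
  have not_tree: "{x, y} \<notin> T"
  proof
    assume "{x, y} \<in> T"
    then obtain u where u: "u \<in> V - {\<rho>}" "{x, y} = {u, p u}" unfolding T parent_tree_def by blast
    show False
    proof (cases "u = v")
      case True
      then have "x = v \<and> y = p v \<or> x = p v \<and> y = v" using u(2) by (simp add: doubleton_eq_iff)
      then have "\<delta> x y = \<delta> v (p v)" using metric_sym[OF met vV] by auto
      then show False using less by simp
    next
      case False
      then have "u \<in> ?S \<longleftrightarrow> p u \<in> ?S" by (rule parent_edge_subtree_side[OF ps u(1)])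
      moreover have "x = u \<and> y = p u \<or> x = p u \<and> y = u" using u(2) by (simp add: doubleton_eq_iff)
      ultimately show False using x y(2) by auto
    qed
  qed
  have reach: "(w, if w \<in> ?S then v else \<rho>) \<in> (adj ?T')\<^sup>*" if "w \<in> V" for w
    using reach_without_parent_edge[OF ps v that] unfolding T[symmetric]
    by (rule reachable_mono[rotated]) blast
  have "graph_connected V ?T'"
  proof (rule graph_connected_via)
    fix u assume u: "u \<in> V"
    show "(u, \<rho>) \<in> (adj ?T')\<^sup>*"
    proof (cases "u \<in> ?S")
      case True
      have "(u, v) \<in> (adj ?T')\<^sup>*" using reach[OF u] True by simp
      also have "(v, x) \<in> (adj ?T')\<^sup>*" using reach[OF xV] x by (simp add: reachable_sym)
      also have "(x, y) \<in> adj ?T'" unfolding adj_def using x y(2) by auto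
      also have "(y, \<rho>) \<in> (adj ?T')\<^sup>*" using reach[OF y(1)] y(2) by simp
      finally show ?thesis .
    qed (use reach[OF u] in simp)
  qed
  moreover have "{v, p v} \<in> T" unfolding T parent_tree_def using v by blast
  ultimately have "edge_weight \<delta> {v, p v} \<le> edge_weight \<delta> {x, y}"
    using mst_exchange[OF mst fin _ xy not_tree] by blast
  then show False using less metric_edge_weight[OF met] vV xV y(1) by simp
qed

lemma mst_parent_edges_separated:
  assumes met: "metric_on V \<delta>" and ps: "parent_structure V \<rho> p dep"
    and T: "T = parent_tree V \<rho> p" and mst: "is_mst V \<delta> (sdg_edges V \<delta> r) T"
    and x: "x \<in> V - {\<rho>}" and y: "y \<in> V - {\<rho>}" and "x \<noteq> y"
  shows "min (\<delta> x (p x)) (\<delta> y (p y)) \<le> \<delta> x y"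
proof (rule ccontr)
  assume "\<not> ?thesis"
  then have lx: "\<delta> x y < \<delta> x (p x)" and ly: "\<delta> y x < \<delta> y (p y)"
    using metric_sym[OF met] x y by auto
  have TG: "T \<subseteq> sdg_edges V \<delta> r" using mst unfolding is_mst_def spanning_tree_def by blast
  have range: "\<delta> w (p w) \<le> r w" if "w \<in> V - {\<rho>}" for w
  proof -
    have "{w, p w} \<in> T" unfolding T parent_tree_def using that by blast
    then show ?thesis using TG sdg_edge_iff[OF met] by blast
  qed
  have xV: "x \<in> V" and yV: "y \<in> V" using x y by auto
  have in_subtree: "b \<in> subtree V \<rho> p a"
    if a: "a \<in> V - {\<rho>}" and b: "b \<in> V" "a \<noteq> b" "\<delta> a b < \<delta> a (p a)" "\<delta> a b \<le> r b" for a b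
  proof (rule ccontr)
    assume out: "b \<notin> subtree V \<rho> p a"
    have "{a, b} \<in> sdg_edges V \<delta> r"
      using a b range[OF a] unfolding sdg_edge_iff[OF met] by auto
    moreover have "a \<in> subtree V \<rho> p a" using a unfolding subtree_def by simp
    ultimately have "\<delta> a (p a) \<le> \<delta> a b"
      using mst_cut_property[OF met ps T mst a _ b(1) out] by blast
    then show False using b(3) by simp
  qed
  have "y \<in> subtree V \<rho> p x"
    using in_subtree[OF x yV \<open>x \<noteq> y\<close> lx] lx ly range[OF y] metric_sym[OF met xV yV] by simp
  moreover have "x \<in> subtree V \<rho> p y"
    using in_subtree[OF y xV _ ly] \<open>x \<noteq> y\<close> lx ly range[OF x] metric_sym[OF met xV yV] by simp
  ultimately show False using subtree_antisym[OF ps] \<open>x \<noteq> y\<close> by blast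
qed

section \<open>A packing bound for separated sets\<close>

lemma separated_near_point:
  assumes met: "metric_on V \<delta>" and BV: "B \<subseteq> V" and fin: "finite B" and c: "c \<in> V"
    and sep: "\<forall>i\<in>B. \<forall>j\<in>B. i \<noteq> j \<longrightarrow> m \<le> \<delta> i j"
  shows "card {i \<in> B. \<delta> i c < m / 2} \<le> 1"
proof -
  have "i = j" if i: "i \<in> B" "\<delta> i c < m / 2" and j: "j \<in> B" "\<delta> j c < m / 2" for i j
  proof (rule ccontr)
    assume "i \<noteq> j"
    have "\<delta> i j \<le> \<delta> i c + \<delta> c j" using metric_triangle[OF met] BV i(1) j(1) c by blast
    moreover have "\<delta> c j = \<delta> j c" using metric_sym[OF met] BV j(1) c by blast
    ultimately have "\<delta> i j < m" using i(2) j(2) by linarith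
    moreover have "m \<le> \<delta> i j" using sep i(1) j(1) \<open>i \<noteq> j\<close> by blast
    ultimately show False by linarith
  qed
  then show ?thesis using card_le_Suc0_iff_eq[of "{i \<in> B. \<delta> i c < m / 2}"] fin by simp
qed

text \<open>An m-separated set of at least two points costs any connected spanning subgraph weight at
  least |B| m / 4.  Each point b sees the truncated distance min(\<delta> b _, m/2) vary by m/2 across the
  graph, while each edge contributes to the variation of at most two of these functions.\<close>
lemma packing_bound:
  assumes met: "metric_on V \<delta>" and conn: "graph_connected V E" and EV: "E \<subseteq> complete_edges V"
    and BV: "B \<subseteq> V" and B2: "2 \<le> card B" and m: "0 < m"
    and sep: "\<forall>i\<in>B. \<forall>j\<in>B. i \<noteq> j \<longrightarrow> m \<le> \<delta> i j"
  shows "real (card B) * m \<le> 4 * weight \<delta> E"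
proof -
  define f where "f i x = min (\<delta> i x) (m / 2)" for i x
  have Bfin: "finite B" using B2 by (intro card_ge_0_finite) simp
  have Efin: "finite E" by (rule finite_edges[OF met EV])
  have each: "m / 2 \<le> (\<Sum>e\<in>E. variation (f i) e)" if i: "i \<in> B" for i
  proof -
    have "\<not> B \<subseteq> {i}"
    proof
      assume "B \<subseteq> {i}"
      then have "card B \<le> 1" using card_mono[of "{i}" B] by simp
      then show False using B2 by simp
    qed
    then obtain j where j: "j \<in> B" "j \<noteq> i" by blast
    have "(i, j) \<in> (adj E)\<^sup>*" using conn BV i j(1) unfolding graph_connected_adj by blast
    then have "\<bar>f i i - f i j\<bar> \<le> (\<Sum>e\<in>E. variation (f i) e)"
      by (rule variation_along_reachable[OF Efin complete_edges_pairs[OF EV]])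
    moreover have "f i i = 0" using metric_zero[OF met] BV i m by (auto simp: f_def)
    moreover have "m \<le> \<delta> i j" using sep i j by auto
    then have "f i j = m / 2" using m by (simp add: f_def)
    ultimately show ?thesis using m by simp
  qed
  have per_edge: "(\<Sum>i\<in>B. variation (f i) e) \<le> 2 * edge_weight \<delta> e" if e: "e \<in> E" for e
  proof -
    obtain a b where ab: "e = {a, b}" "a \<in> V" "b \<in> V" using EV e by (blast elim: complete_edgeE)
    define N where "N = {i \<in> B. \<delta> i a < m / 2} \<union> {i \<in> B. \<delta> i b < m / 2}"
    have cardN: "card N \<le> 2"
      using separated_near_point[OF met BV Bfin ab(2) sep] separated_near_point[OF met BV Bfin ab(3) sep]
        card_Un_le[of "{i \<in> B. \<delta> i a < m / 2}" "{i \<in> B. \<delta> i b < m / 2}"]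
      unfolding N_def by linarith
    have "(\<Sum>i\<in>B. variation (f i) e) = (\<Sum>i\<in>N. variation (f i) e)"
      using Bfin by (intro sum.mono_neutral_right) (auto simp: N_def f_def ab(1))
    also have "\<dots> \<le> (\<Sum>i\<in>N. \<delta> a b)"
    proof (rule sum_mono)
      fix i assume "i \<in> N"
      then have "i \<in> V" using BV unfolding N_def by blast
      have "\<bar>f i a - f i b\<bar> \<le> \<bar>\<delta> i a - \<delta> i b\<bar>" unfolding f_def by (simp add: min_def abs_if)
      also have "\<dots> \<le> \<delta> a b" by (rule metric_lipschitz[OF met \<open>i \<in> V\<close> ab(2,3)])
      finally show "variation (f i) e \<le> \<delta> a b" unfolding ab(1) by simp
    qed
    also have "\<dots> = real (card N) * \<delta> a b" by simp
    also have "\<dots> \<le> 2 * \<delta> a b"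
      using cardN metric_nonneg[OF met ab(2,3)] by (intro mult_right_mono) auto
    finally show ?thesis using metric_edge_weight[OF met ab(2,3)] ab(1) by simp
  qed
  have "real (card B) * (m / 2) = (\<Sum>i\<in>B. m / 2)" by simp
  also have "\<dots> \<le> (\<Sum>i\<in>B. \<Sum>e\<in>E. variation (f i) e)" using each by (rule sum_mono)
  also have "\<dots> = (\<Sum>e\<in>E. \<Sum>i\<in>B. variation (f i) e)" by (rule sum.swap)
  also have "\<dots> \<le> (\<Sum>e\<in>E. 2 * edge_weight \<delta> e)" using per_edge by (rule sum_mono)
  also have "\<dots> = 2 * weight \<delta> E" unfolding weight_def by (simp add: sum_distrib_left)
  finally show ?thesis by simp
qed

section \<open>Summing in increasing order\<close>

text \<open>H(N) \<le> 2 ln (N + 1), from 1 / (N + 2) \<le> ln (N + 2) - ln (N + 1).\<close>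
lemma harmonic_le_two_ln: "(\<Sum>i=1..N. 1 / real i) \<le> 2 * ln (real N + 1)"
proof (induction N)
  case (Suc N)
  have "ln ((real N + 1) / (real N + 2)) \<le> (real N + 1) / (real N + 2) - 1"
    by (rule ln_le_minus_one) simp
  then have "1 / (real N + 2) \<le> ln (real N + 2) - ln (real N + 1)"
    by (simp add: ln_div field_simps)
  moreover have "1 / real (Suc N) \<le> 2 / (real N + 2)" by (simp add: field_simps)
  ultimately have "1 / real (Suc N) \<le> 2 * ln (real (Suc N) + 1) - 2 * ln (real N + 1)"
    by (simp add: add.commute)
  then show ?case using Suc.IH by simp
qed simp

text \<open>If every subset B of A satisfies |B| * min_B l \<le> K, then \<Sum>_A l \<le> K * H(|A|): remove the
  minimum of A (which pays at most K / |A|) and recurse.\<close>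
lemma sum_le_harmonic:
  fixes l :: "'a \<Rightarrow> real"
  assumes "finite A"
    and packing: "\<And>B b. B \<subseteq> A \<Longrightarrow> b \<in> B \<Longrightarrow> \<forall>b'\<in>B. l b \<le> l b' \<Longrightarrow> real (card B) * l b \<le> K"
  shows "(\<Sum>v\<in>A. l v) \<le> K * (\<Sum>i=1..card A. 1 / real i)"
  using assms
proof (induction "card A" arbitrary: A)
  case (Suc n)
  then have "A \<noteq> {}" by auto
  then obtain b where b: "b \<in> A" "\<forall>b'\<in>A. l b \<le> l b'"
    using ex_min_if_finite[of "l ` A"] Suc.prems(1) by (auto simp: not_less)
  have "real (Suc n) * l b \<le> K" using Suc.prems(2)[OF order_refl b] Suc.hyps(2) by simp
  then have "l b \<le> K * (1 / real (Suc n))" by (simp add: field_simps)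
  moreover have "(\<Sum>v\<in>A - {b}. l v) \<le> K * (\<Sum>i=1..n. 1 / real i)"
  proof -
    have "n = card (A - {b})" using Suc.hyps(2) Suc.prems(1) b(1) by simp
    moreover have "real (card B) * l b' \<le> K"
      if "B \<subseteq> A - {b}" "b' \<in> B" "\<forall>b''\<in>B. l b' \<le> l b''" for B b'
      using Suc.prems(2) that by blast
    ultimately show ?thesis using Suc.hyps(1)[of "A - {b}"] Suc.prems(1) by simp
  qed
  moreover have "(\<Sum>v\<in>A. l v) = l b + (\<Sum>v\<in>A - {b}. l v)" by (rule sum.remove[OF Suc.prems(1) b(1)])
  moreover have "(\<Sum>i=1..Suc n. 1 / real i) = (\<Sum>i=1..n. 1 / real i) + 1 / real (Suc n)" by simp
  ultimately show ?case unfolding Suc.hyps(2)[symmetric] by (simp add: distrib_left)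
qed simp

lemma mst_parent_packing:
  assumes met: "metric_on V \<delta>" and ps: "parent_structure V \<rho> p dep"
    and T: "T = parent_tree V \<rho> p" and mst: "is_mst V \<delta> (sdg_edges V \<delta> r) T"
    and conn: "graph_connected V E" and EV: "E \<subseteq> complete_edges V"
    and B: "B \<subseteq> V - {\<rho>}" and b: "b \<in> B" and b_min: "\<forall>b'\<in>B. \<delta> b (p b) \<le> \<delta> b' (p b')"
  shows "real (card B) * \<delta> b (p b) \<le> 4 * weight \<delta> E"
proof -
  have W: "0 \<le> weight \<delta> E" by (rule weight_nonneg[OF met EV])
  have bV: "b \<in> V" "p b \<in> V" using B b parent_props[OF ps] by auto
  have Bfin: "finite B" using B metric_finite[OF met] finite_subset by blast
  consider "card B \<le> 1" | "\<delta> b (p b) = 0" | "2 \<le> card B" "0 < \<delta> b (p b)"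
    using metric_nonneg[OF met bV] by linarith
  then show ?thesis
  proof cases
    case 1
    moreover have "card B \<noteq> 0" using b Bfin by auto
    ultimately have "card B = 1" by linarith
    then show ?thesis using dist_le_connected_weight[OF met conn EV bV] W by simp
  next
    case 2 then show ?thesis using W by simp
  next
    case 3
    have "\<forall>i\<in>B. \<forall>j\<in>B. i \<noteq> j \<longrightarrow> \<delta> b (p b) \<le> \<delta> i j"
    proof (intro ballI impI)
      fix i j assume "i \<in> B" "j \<in> B" "i \<noteq> j"
      then have "min (\<delta> i (p i)) (\<delta> j (p j)) \<le> \<delta> i j"
        using mst_parent_edges_separated[OF met ps T mst] B by blast
      moreover have "\<delta> b (p b) \<le> \<delta> i (p i)" "\<delta> b (p b) \<le> \<delta> j (p j)"
        using b_min \<open>i \<in> B\<close> \<open>j \<in> B\<close> by auto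
      ultimately show "\<delta> b (p b) \<le> \<delta> i j" by linarith
    qed
    then show ?thesis using packing_bound[OF met conn EV _ 3] B by blast
  qed
qed

text \<open>Rooting T anywhere, w(T) is the sum of the parent edge lengths; summing them in increasing
  order with the packing bound gives w(T) \<le> 4 w(E) H(n - 1) \<le> 8 ln n w(E).\<close>
lemma mst_weight_le_log:
  assumes met: "metric_on V \<delta>" and "V \<noteq> {}" and mst: "is_mst V \<delta> (sdg_edges V \<delta> r) T"
    and conn: "graph_connected V E" and EV: "E \<subseteq> complete_edges V"
  shows "weight \<delta> T \<le> 8 * ln (real (card V)) * weight \<delta> E"
proof -
  obtain \<rho> where root: "\<rho> \<in> V" using assms(2) by blast
  have fin: "finite V" by (rule metric_finite[OF met])
  obtain p dep where ps: "parent_structure V \<rho> p dep" and T: "T = parent_tree V \<rho> p"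
    using spanning_tree_is_parent_tree[OF _ sdg_edges_subset fin root] mst
    unfolding is_mst_def by blast
  have W: "0 \<le> weight \<delta> E" by (rule weight_nonneg[OF met EV])
  have "Suc (card (V - {\<rho>})) = card V" using fin root by (rule card_Suc_Diff1)
  then have n: "real (card (V - {\<rho>})) + 1 = real (card V)" by (metis of_nat_Suc add.commute)
  have "weight \<delta> T = (\<Sum>v\<in>V - {\<rho>}. \<delta> v (p v))" unfolding T by (rule weight_parent_tree[OF ps met])
  also have "\<dots> \<le> 4 * weight \<delta> E * (\<Sum>i=1..card (V - {\<rho>}). 1 / real i)"
    using fin mst_parent_packing[OF met ps T mst conn EV] by (intro sum_le_harmonic) auto
  also have "\<dots> \<le> 4 * weight \<delta> E * (2 * ln (real (card V)))"
    using harmonic_le_two_ln[of "card (V - {\<rho>})"] W n by (intro mult_left_mono) auto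
  finally show ?thesis by (simp add: algebra_simps)
qed

lemma tree_range_values: "{edge_weight \<delta> e | e. e \<in> T \<and> v \<in> e} = edge_weight \<delta> ` {e \<in> T. v \<in> e}"
  by blast

lemma tree_range_ge: "finite T \<Longrightarrow> e \<in> T \<Longrightarrow> v \<in> e \<Longrightarrow> edge_weight \<delta> e \<le> tree_range \<delta> T v"
  unfolding tree_range_def tree_range_values by (rule Max_ge) auto

lemma tree_range_attained:
  assumes "finite T" "e \<in> T" "v \<in> e"
  obtains e0 where "e0 \<in> T" "v \<in> e0" "tree_range \<delta> T v = edge_weight \<delta> e0"
proof -
  have "tree_range \<delta> T v \<in> edge_weight \<delta> ` {e \<in> T. v \<in> e}"
    unfolding tree_range_def tree_range_values using assms by (intro Max_in) auto
  then show ?thesis using that by blast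
qed

lemma incident_edge_exists:
  assumes "2 \<le> card V" "graph_connected V T" "v \<in> V"
  obtains e where "e \<in> T" "v \<in> e"
proof -
  have "\<not> V \<subseteq> {v}"
  proof
    assume "V \<subseteq> {v}"
    then have "card V \<le> 1" using card_mono[of "{v}" V] by simp
    then show False using assms(1) by simp
  qed
  then obtain u where "u \<in> V" "u \<noteq> v" by blast
  then obtain z where "{v, z} \<in> T" using connected_incident_edge[OF assms(2) _ assms(3)] by blast
  then show ?thesis using that by blast
qed

text \<open>Giving each vertex the heaviest incident edge of a connected subgraph of SDG(M, r') is
  feasible for the bound r': the subgraph survives, and every incident edge respects r'.\<close>
lemma tree_range_feasible:
  assumes met: "metric_on V \<delta>" and n2: "2 \<le> card V"
    and TG: "T \<subseteq> sdg_edges V \<delta> r'" and conn: "graph_connected V T"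
  shows "feasible V \<delta> r' (tree_range \<delta> T)"
proof -
  have TV: "T \<subseteq> complete_edges V" using TG sdg_edges_subset by blast
  have fin: "finite T" by (rule finite_edges[OF met TV])
  have range: "0 \<le> tree_range \<delta> T v \<and> tree_range \<delta> T v \<le> r' v" if v: "v \<in> V" for v
  proof -
    obtain e where "e \<in> T" "v \<in> e" using incident_edge_exists[OF n2 conn v] .
    then obtain e0 where e0: "e0 \<in> T" "v \<in> e0" "tree_range \<delta> T v = edge_weight \<delta> e0"
      using tree_range_attained[OF fin] by blast
    then obtain a b where ab: "e0 = {a, b}" using TV by (blast elim: complete_edgeE)
    then have "a \<in> V \<and> b \<in> V \<and> a \<noteq> b \<and> \<delta> a b \<le> r' a \<and> \<delta> a b \<le> r' b"
      using TG e0(1) sdg_edge_iff[OF met] by blast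
    then show ?thesis using e0(2,3) ab metric_edge_weight[OF met] metric_nonneg[OF met] by auto
  qed
  have "e \<in> sdg_edges V \<delta> (tree_range \<delta> T)" if e: "e \<in> T" for e
  proof -
    obtain a b where ab: "e = {a, b}" "a \<in> V" "b \<in> V" "a \<noteq> b" using TV e by (blast elim: complete_edgeE)
    then have "\<delta> a b \<le> tree_range \<delta> T a" "\<delta> a b \<le> tree_range \<delta> T b"
      using tree_range_ge[OF fin e, where \<delta> = \<delta>] metric_edge_weight[OF met] by auto
    then show ?thesis unfolding ab(1) sdg_edge_iff[OF met] using ab(2-4) by blast
  qed
  then have "graph_connected V (sdg_edges V \<delta> (tree_range \<delta> T))"
    using graph_connected_mono[OF conn] by blast
  then show ?thesis unfolding feasible_def using range by blast
qed

text \<open>Its cost is at most twice the weight: each edge is charged once by each of its two ends.\<close>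
lemma cost_tree_range:
  assumes met: "metric_on V \<delta>" and n2: "2 \<le> card V"
    and TV: "T \<subseteq> complete_edges V" and conn: "graph_connected V T"
  shows "COST V (tree_range \<delta> T) \<le> 2 * weight \<delta> T"
proof -
  have fin: "finite V" by (rule metric_finite[OF met])
  have Tfin: "finite T" by (rule finite_edges[OF met TV])
  have ew: "0 \<le> edge_weight \<delta> e" if "e \<in> T" for e
    using edge_weight_nonneg[OF met] TV that by blast
  have "tree_range \<delta> T v \<le> (\<Sum>e\<in>{e \<in> T. v \<in> e}. edge_weight \<delta> e)" if v: "v \<in> V" for v
  proof -
    obtain e where "e \<in> T" "v \<in> e" using incident_edge_exists[OF n2 conn v] .
    then obtain e0 where e0: "e0 \<in> T" "v \<in> e0" "tree_range \<delta> T v = edge_weight \<delta> e0"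
      using tree_range_attained[OF Tfin] by blast
    show ?thesis unfolding e0(3) using Tfin e0(1,2) ew by (intro member_le_sum) auto
  qed
  then have "COST V (tree_range \<delta> T) \<le> (\<Sum>v\<in>V. \<Sum>e\<in>{e \<in> T. v \<in> e}. edge_weight \<delta> e)"
    unfolding COST_def by (rule sum_mono)
  also have "\<dots> = (\<Sum>e\<in>T. \<Sum>v\<in>{v \<in> V. v \<in> e}. edge_weight \<delta> e)"
    using sum.swap_restrict[OF fin Tfin, of "\<lambda>v e. edge_weight \<delta> e" "\<lambda>v e. v \<in> e"] by simp
  also have "\<dots> = (\<Sum>e\<in>T. 2 * edge_weight \<delta> e)"
  proof (rule sum.cong[OF refl])
    fix e assume "e \<in> T"
    then obtain a b where ab: "e = {a, b}" "a \<in> V" "b \<in> V" "a \<noteq> b" using TV by (blast elim: complete_edgeE)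
    then have "{v \<in> V. v \<in> e} = {a, b}" by auto
    then show "(\<Sum>v\<in>{v \<in> V. v \<in> e}. edge_weight \<delta> e) = 2 * edge_weight \<delta> e" using ab(4) by simp
  qed
  also have "\<dots> = 2 * weight \<delta> T" unfolding weight_def by (simp add: sum_distrib_left)
  finally show ?thesis .
qed

lemma cost_nonneg: "feasible V \<delta> r' r \<Longrightarrow> 0 \<le> COST V r"
  unfolding feasible_def COST_def by (simp add: sum_nonneg)

lemma OPT_bounded_le_cost: "feasible V \<delta> r' r \<Longrightarrow> OPT_bounded V \<delta> r' \<le> COST V r"
  unfolding OPT_bounded_def by (rule cInf_lower) (auto intro: cost_nonneg simp: bdd_below_def)

lemma le_OPT_bounded:
  assumes "feasible V \<delta> r' r0" and "\<And>r. feasible V \<delta> r' r \<Longrightarrow> c \<le> COST V r"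
  shows "c \<le> OPT_bounded V \<delta> r'"
  unfolding OPT_bounded_def using assms by (intro cInf_greatest) auto

lemma bound_feasible:
  "(\<forall>v\<in>V. 0 < r' v) \<Longrightarrow> graph_connected V (sdg_edges V \<delta> r') \<Longrightarrow> feasible V \<delta> r' r'"
  unfolding feasible_def by (simp add: less_imp_le)

lemma diam_ge:
  assumes "finite V" "u \<in> V" "v \<in> V"
  shows "\<delta> u v \<le> diam V \<delta>"
proof -
  have "{\<delta> u v | u v. u \<in> V \<and> v \<in> V} = (\<lambda>(u, v). \<delta> u v) ` (V \<times> V)" by auto
  then have "finite {\<delta> u v | u v. u \<in> V \<and> v \<in> V}" using assms(1) by simp
  then show ?thesis unfolding diam_def using assms(2,3) by (intro Max_ge) auto
qed

lemma cap_at_diam: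
  assumes met: "metric_on V \<delta>" and feas: "feasible V \<delta> r' r"
  shows "feasible V \<delta> (\<lambda>_. diam V \<delta>) (\<lambda>v. min (r v) (diam V \<delta>))"
    and "COST V (\<lambda>v. min (r v) (diam V \<delta>)) \<le> COST V r"
proof -
  have fin: "finite V" by (rule metric_finite[OF met])
  have "sdg_edges V \<delta> r \<subseteq> sdg_edges V \<delta> (\<lambda>v. min (r v) (diam V \<delta>))"
  proof
    fix e assume "e \<in> sdg_edges V \<delta> r"
    then obtain a b where "e = {a, b}" "a \<in> V" "b \<in> V" "a \<noteq> b" "\<delta> a b \<le> r a" "\<delta> a b \<le> r b"
      unfolding sdg_edges_def by blast
    then show "e \<in> sdg_edges V \<delta> (\<lambda>v. min (r v) (diam V \<delta>))"
      using diam_ge[OF fin] unfolding sdg_edges_def by fastforce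
  qed
  moreover have "0 \<le> diam V \<delta>" if "v \<in> V" for v
    using diam_ge[OF fin that that, of \<delta>] metric_zero[OF met that] by simp
  ultimately show "feasible V \<delta> (\<lambda>_. diam V \<delta>) (\<lambda>v. min (r v) (diam V \<delta>))"
    using feas graph_connected_mono unfolding feasible_def by auto
  show "COST V (\<lambda>v. min (r v) (diam V \<delta>)) \<le> COST V r" unfolding COST_def by (rule sum_mono) simp
qed

text \<open>Since capping is cost-free, the unbounded optimum is at most the bounded one.\<close>
lemma OPT_le_OPT_bounded:
  assumes met: "metric_on V \<delta>" and feas: "feasible V \<delta> r' r0"
  shows "OPT V \<delta> \<le> OPT_bounded V \<delta> r'"
  unfolding OPT_def
  using feas
proof (rule le_OPT_bounded)
  fix r assume "feasible V \<delta> r' r"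
  then show "OPT_bounded V \<delta> (\<lambda>_. diam V \<delta>) \<le> COST V r"
    using OPT_bounded_le_cost cap_at_diam[OF met] by (meson order_trans)
qed

text \<open>Every feasible assignment contains a spanning tree of weight at most its cost: in a
  breadth-first tree each vertex pays for the edge to its parent out of its own range.\<close>
lemma spanning_tree_weight_le_cost:
  assumes met: "metric_on V \<delta>" and "V \<noteq> {}" and feas: "feasible V \<delta> r' r"
  obtains T where "spanning_tree V (sdg_edges V \<delta> r) T" "weight \<delta> T \<le> COST V r"
proof -
  obtain \<rho> where root: "\<rho> \<in> V" using assms(2) by blast
  have conn: "graph_connected V (sdg_edges V \<delta> r)" and r0: "\<forall>v\<in>V. 0 \<le> r v"
    using feas unfolding feasible_def by auto
  obtain p and dep :: "'a \<Rightarrow> nat" where ps: "parent_structure V \<rho> p dep"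
    and sub: "parent_tree V \<rho> p \<subseteq> sdg_edges V \<delta> r"
    using parent_structure_exists[OF conn root sdg_edges_subset] by blast
  have "weight \<delta> (parent_tree V \<rho> p) = (\<Sum>v\<in>V - {\<rho>}. \<delta> v (p v))" by (rule weight_parent_tree[OF ps met])
  also have "\<dots> \<le> (\<Sum>v\<in>V - {\<rho>}. r v)"
  proof (rule sum_mono)
    fix v assume "v \<in> V - {\<rho>}"
    then have "{v, p v} \<in> sdg_edges V \<delta> r" using sub unfolding parent_tree_def by blast
    then show "\<delta> v (p v) \<le> r v" using sdg_edge_iff[OF met] by blast
  qed
  also have "\<dots> \<le> COST V r" unfolding COST_def using r0 metric_finite[OF met] by (intro sum_mono2) auto
  finally show ?thesis using that parent_tree_spanning[OF ps metric_finite[OF met] sub] by blast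
qed

text \<open>The unbounded problem is always feasible: with all ranges diam(M), SDG is complete.\<close>
lemma unbounded_feasible:
  assumes met: "metric_on V \<delta>"
  shows "feasible V \<delta> (\<lambda>_. diam V \<delta>) (\<lambda>_. diam V \<delta>)"
proof -
  have fin: "finite V" by (rule metric_finite[OF met])
  have "(u, v) \<in> (adj (sdg_edges V \<delta> (\<lambda>_. diam V \<delta>)))\<^sup>*" if "u \<in> V" "v \<in> V" for u v
  proof (cases "u = v")
    case False
    then have "{u, v} \<in> sdg_edges V \<delta> (\<lambda>_. diam V \<delta>)"
      unfolding sdg_edge_iff[OF met] using that diam_ge[OF fin] by blast
    then show ?thesis unfolding adj_def using False by blast
  qed simp
  moreover have "0 \<le> diam V \<delta>" if "v \<in> V" for v
    using diam_ge[OF fin that that, of \<delta>] metric_zero[OF met that] by simp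
  ultimately show ?thesis unfolding feasible_def graph_connected_adj by blast
qed

lemma mst_weight_le_OPT:
  assumes met: "metric_on V \<delta>" and "V \<noteq> {}" and mstm: "is_mst V \<delta> (complete_edges V) Tm"
  shows "weight \<delta> Tm \<le> OPT V \<delta>"
  unfolding OPT_def using unbounded_feasible[OF met]
proof (rule le_OPT_bounded)
  fix r assume "feasible V \<delta> (\<lambda>_. diam V \<delta>) r"
  then obtain T where T: "spanning_tree V (sdg_edges V \<delta> r) T" "weight \<delta> T \<le> COST V r"
    using spanning_tree_weight_le_cost[OF met assms(2)] by blast
  then have "spanning_tree V (complete_edges V) T"
    using sdg_edges_subset unfolding spanning_tree_def by blast
  then show "weight \<delta> Tm \<le> COST V r" using mstm T(2) unfolding is_mst_def by fastforce
qed

lemma range_assignment_from_mst: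
  assumes met: "metric_on V \<delta>" and n2: "2 \<le> card V"
    and mst: "is_mst V \<delta> (sdg_edges V \<delta> r') T" and mstm: "is_mst V \<delta> (complete_edges V) Tm"
  shows "feasible V \<delta> r' (tree_range \<delta> T) \<and> COST V (tree_range \<delta> T) \<le> 2 * weight \<delta> T \<and>
    weight \<delta> T \<le> 16 * ln (real (card V)) * weight \<delta> Tm \<and> weight \<delta> Tm \<le> 16 * OPT V \<delta>"
proof -
  have ne: "V \<noteq> {}" using n2 by auto
  have TG: "T \<subseteq> sdg_edges V \<delta> r'" and conn: "graph_connected V T"
    using mst unfolding is_mst_def spanning_tree_def by auto
  have TmV: "Tm \<subseteq> complete_edges V" and connm: "graph_connected V Tm"
    using mstm unfolding is_mst_def spanning_tree_def by auto
  have W: "0 \<le> weight \<delta> Tm" by (rule weight_nonneg[OF met TmV])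
  have "0 \<le> ln (real (card V)) * weight \<delta> Tm" using n2 W by simp
  then have "weight \<delta> T \<le> 16 * ln (real (card V)) * weight \<delta> Tm"
    using mst_weight_le_log[OF met ne mst connm TmV] by linarith
  moreover have "weight \<delta> Tm \<le> 16 * OPT V \<delta>" using mst_weight_le_OPT[OF met ne mstm] W by linarith
  moreover have "feasible V \<delta> r' (tree_range \<delta> T)" by (rule tree_range_feasible[OF met n2 TG conn])
  moreover have "COST V (tree_range \<delta> T) \<le> 2 * weight \<delta> T"
    using cost_tree_range[OF met n2 _ conn] TG sdg_edges_subset by blast
  ultimately show ?thesis by blast
qed

lemma OPT_bounded_le_log_OPT:
  assumes met: "metric_on V \<delta>" and n2: "2 \<le> card V" and conn: "graph_connected V (sdg_edges V \<delta> r')"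
  shows "OPT_bounded V \<delta> r' \<le> 16 * ln (real (card V)) * OPT V \<delta>"
proof -
  have ne: "V \<noteq> {}" and fin: "finite V" using n2 metric_finite[OF met] by auto
  obtain T where mst: "is_mst V \<delta> (sdg_edges V \<delta> r') T"
    using mst_exists[OF fin ne conn sdg_edges_subset] .
  obtain Tm where mstm: "is_mst V \<delta> (complete_edges V) Tm"
    using mst_exists[OF fin ne graph_connected_mono[OF conn sdg_edges_subset] order_refl] .
  then have TmV: "Tm \<subseteq> complete_edges V" and connm: "graph_connected V Tm"
    unfolding is_mst_def spanning_tree_def by auto
  note bounds = range_assignment_from_mst[OF met n2 mst mstm]
  have "OPT_bounded V \<delta> r' \<le> COST V (tree_range \<delta> T)" using bounds OPT_bounded_le_cost by blast
  also have "\<dots> \<le> 2 * weight \<delta> T" using bounds by blast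
  also have "\<dots> \<le> 2 * (8 * ln (real (card V)) * weight \<delta> Tm)"
    using mst_weight_le_log[OF met ne mst connm TmV] by (simp add: ac_simps)
  also have "\<dots> \<le> 2 * (8 * ln (real (card V)) * OPT V \<delta>)"
    using mst_weight_le_OPT[OF met ne mstm] n2 by (simp add: mult_left_mono)
  finally show ?thesis by simp
qed

theorem mainTheorem5:
  "\<exists>C>0. \<forall>(V :: 'a set) \<delta> r'.
     metric_on V \<delta> \<and> card V \<ge> 2 \<and> (\<forall>v\<in>V. r' v > 0) \<and>
     graph_connected V (sdg_edges V \<delta> r') \<longrightarrow>
       OPT V \<delta> \<le> OPT_bounded V \<delta> r' \<and>
       OPT_bounded V \<delta> r' \<le> C * ln (real (card V)) * OPT V \<delta> \<and>
       (\<forall>T Tm. is_mst V \<delta> (sdg_edges V \<delta> r') T \<and> is_mst V \<delta> (complete_edges V) Tm \<longrightarrow>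
          feasible V \<delta> r' (tree_range \<delta> T) \<and>
          COST V (tree_range \<delta> T) \<le> 2 * weight \<delta> T \<and>
          weight \<delta> T \<le> C * ln (real (card V)) * weight \<delta> Tm \<and>
          weight \<delta> Tm \<le> C * OPT V \<delta>)"
proof (intro exI[of _ "16::real"] conjI allI impI)
  fix V :: "'a set" and \<delta> r' T Tm
  assume "metric_on V \<delta> \<and> card V \<ge> 2 \<and> (\<forall>v\<in>V. r' v > 0) \<and> graph_connected V (sdg_edges V \<delta> r')"
  then have met: "metric_on V \<delta>" and n2: "2 \<le> card V" and feas: "feasible V \<delta> r' r'"
    and conn: "graph_connected V (sdg_edges V \<delta> r')" using bound_feasible by auto
  show "OPT V \<delta> \<le> OPT_bounded V \<delta> r'" by (rule OPT_le_OPT_bounded[OF met feas])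
  show "OPT_bounded V \<delta> r' \<le> 16 * ln (real (card V)) * OPT V \<delta>"
    by (rule OPT_bounded_le_log_OPT[OF met n2 conn])
  assume "is_mst V \<delta> (sdg_edges V \<delta> r') T \<and> is_mst V \<delta> (complete_edges V) Tm"
  then show "feasible V \<delta> r' (tree_range \<delta> T)" "COST V (tree_range \<delta> T) \<le> 2 * weight \<delta> T"
    "weight \<delta> T \<le> 16 * ln (real (card V)) * weight \<delta> Tm" "weight \<delta> Tm \<le> 16 * OPT V \<delta>"
    using range_assignment_from_mst[OF met n2] by blast+
qed simp

end
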